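(* Let $\Psi$ be a root subsystem of $\Phi$, let $\Delta=(D_0,L_{\beta_1},D_1,\dots,L_{\beta_m},D_m)$ be a gallery in $\Psi$, let $i\in[0,m]$, and let $C\in\mathrm{Ch}_\Phi$ be a chamber lifting $D_i$. Then there exists a unique gallery in $\Phi$ that lifts $\Delta$ and whose $i$th chamber is $C$.
   Context: $E$ is a finite-dimensional real Euclidean space with inner product $(\cdot,\cdot)$; $\Phi\subset E$ is a finite (reduced) root system (not necessarily spanning, not necessarily crystallographic) with reflections $\omega_\alpha$ through $L_\alpha=\alpha^\perp$. A root subsystem is a nonempty $\Psi\subset\Phi$ stable under $\omega_\alpha$, $\alpha\in\Psi$. For $X\subset\Phi$, $\mathrm{Ch}_X$ is the set of connected components of $E\setminus\bigcup_{\alpha\in X}L_\alpha$. Chambers $C,D\in\mathrm{Ch}_X$ are connected through $L_\alpha$ if $\overline C\cap\overline D\cap L_\alpha$ has nonempty interior in $L_\alpha$. A gallery in $X$ (for $X=\Phi$ or a root subsystem) is a sequence $(C_0,L_{\alpha_1},C_1,\dots,L_{\alpha_n},C_n)$ with $C_j\in\mathrm{Ch}_X$, $\alpha_j\in X$, and $C_{j-1},C_j$ connected through $L_{\alpha_j}$ for all $j$; $C_j$ is its $j$th chamber and $(L_{\alpha_1},\dots,L_{\alpha_n})$ its sequence of walls. For $C\in\mathrm{Ch}_\Phi$, $\Phi^+(C)=\{\alpha\in\Phi:(e,\alpha)>0\ \forall e\in C\}$ and $\Phi^s(C)$ is the unique simple system of $\Phi$ contained in $\Phi^+(C)$; similarly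 $\Psi^s(D)$ for $D\in\mathrm{Ch}_\Psi$. A chamber $C\in\mathrm{Ch}_\Phi$ lifts $D\in\mathrm{Ch}_\Psi$ if $\Psi^s(D)\subset\Phi^s(C)$. A gallery $\Gamma$ in $\Phi$ lifts a gallery $\Delta$ in $\Psi$ if their sequences of walls coincide and, for each $j$, the $j$th chamber of $\Gamma$ lifts the $j$th chamber of $\Delta$. *)

theory Defs
  imports "HOL-Analysis.Analysis"
begin

definition refl_vec :: "'a::euclidean_space \<Rightarrow> 'a \<Rightarrow> 'a" where
  "refl_vec \<alpha> x = x - ((2 * (x \<bullet> \<alpha>)) / (\<alpha> \<bullet> \<alpha>)) *\<^sub>R \<alpha>"

definition hyp :: "'a::euclidean_space \<Rightarrow> 'a set" where
  "hyp \<alpha> = {x. x \<bullet> \<alpha> = 0}"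

text \<open>Finite reduced root system (not necessarily spanning or crystallographic).\<close>
definition root_system :: "'a::euclidean_space set \<Rightarrow> bool" where
  "root_system \<Phi> \<longleftrightarrow> finite \<Phi> \<and> 0 \<notin> \<Phi> \<and>
     (\<forall>\<alpha>\<in>\<Phi>. \<forall>\<beta>\<in>\<Phi>. refl_vec \<alpha> \<beta> \<in> \<Phi>) \<and>
     (\<forall>\<alpha>\<in>\<Phi>. \<forall>c::real. c *\<^sub>R \<alpha> \<in> \<Phi> \<longrightarrow> c = 1 \<or> c = -1)"

definition root_subsystem :: "'a::euclidean_space set \<Rightarrow> 'a set \<Rightarrow> bool" where
  "root_subsystem \<Phi> \<Psi> \<longleftrightarrow> \<Psi> \<noteq> {} \<and> \<Psi> \<subseteq> \<Phi> \<and> (\<forall>\<alpha>\<in>\<Psi>. \<forall>\<beta>\<in>\<Psi>. refl_vec \<alpha> \<beta> \<in> \<Psi>)"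

definition Ch :: "'a::euclidean_space set \<Rightarrow> 'a set set" where
  "Ch X = components (UNIV - (\<Union>\<alpha>\<in>X. hyp \<alpha>))"

definition connected_through :: "'a::euclidean_space set \<Rightarrow> 'a set \<Rightarrow> 'a set \<Rightarrow> bool" where
  "connected_through C D L \<longleftrightarrow>
     (\<exists>U. openin (top_of_set L) U \<and> U \<noteq> {} \<and> U \<subseteq> closure C \<inter> closure D \<inter> L)"

text \<open>A gallery is a pair (chambers C_0..C_n, walls L_1..L_n).\<close>
definition gallery :: "'a::euclidean_space set \<Rightarrow> 'a set list \<times> 'a set list \<Rightarrow> bool" where
  "gallery X G \<longleftrightarrow> (let Cs = fst G; Ws = snd G in
     length Cs = Suc (length Ws) \<and>
     (\<forall>j < length Cs. Cs ! j \<in> Ch X) \<and>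
     (\<forall>j < length Ws. \<exists>\<alpha>\<in>X. Ws ! j = hyp \<alpha> \<and>
          connected_through (Cs ! j) (Cs ! Suc j) (hyp \<alpha>)))"

definition pos_roots :: "'a::euclidean_space set \<Rightarrow> 'a set \<Rightarrow> 'a set" where
  "pos_roots \<Phi> C = {\<alpha>\<in>\<Phi>. \<forall>e\<in>C. e \<bullet> \<alpha> > 0}"

definition simple_system :: "'a::euclidean_space set \<Rightarrow> 'a set \<Rightarrow> bool" where
  "simple_system \<Phi> S \<longleftrightarrow> S \<subseteq> \<Phi> \<and> finite S \<and> independent S \<and>
     (\<forall>\<alpha>\<in>\<Phi>. \<exists>c. \<alpha> = (\<Sum>\<beta>\<in>S. c \<beta> *\<^sub>R \<beta>) \<and>
          ((\<forall>\<beta>\<in>S. c \<beta> \<ge> 0) \<or> (\<forall>\<beta>\<in>S. c \<beta> \<le> 0)))"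

definition simple_roots :: "'a::euclidean_space set \<Rightarrow> 'a set \<Rightarrow> 'a set" where
  "simple_roots \<Phi> C = (THE S. simple_system \<Phi> S \<and> S \<subseteq> pos_roots \<Phi> C)"

definition lifts_chamber :: "'a::euclidean_space set \<Rightarrow> 'a set \<Rightarrow> 'a set \<Rightarrow> 'a set \<Rightarrow> bool" where
  "lifts_chamber \<Phi> \<Psi> C D \<longleftrightarrow> simple_roots \<Psi> D \<subseteq> simple_roots \<Phi> C"

definition lifts_gallery :: "'a::euclidean_space set \<Rightarrow> 'a set \<Rightarrow>
    'a set list \<times> 'a set list \<Rightarrow> 'a set list \<times> 'a set list \<Rightarrow> bool" where
  "lifts_gallery \<Phi> \<Psi> \<Gamma> \<Delta> \<longleftrightarrow> snd \<Gamma> = snd \<Delta> \<and> length (fst \<Gamma>) = length (fst \<Delta>) \<and>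
     (\<forall>j < length (fst \<Gamma>). lifts_chamber \<Phi> \<Psi> (fst \<Gamma> ! j) (fst \<Delta> ! j))"

end

theory Submission
  imports Defs
begin

text \<open>Lifting is done one wall at a time. If D and D' are adjacent chambers of \<Psi> through the
  hyperplane of b, then D' is D or its mirror image under the reflection s_b, and b or -b is a
  simple root of D. A chamber C lifting D has the simple roots of D among its own, so b or -b is
  simple for C as well and hyp b carries a wall of C; the adjacent chamber C or s_b C then lifts D'
  since reflections map simple systems to simple systems. It is the only one: a lift of D' lies
  inside D', which decides on which side of hyp b it lies, and two chambers adjacent to C through
  hyp b on the same side coincide. Propagating forward and backward from the i-th chamber gives
  the unique lifted gallery.\<close>

section \<open>Reflections and root systems\<close>

lemma refl_vec_adj: "refl_vec a x \<bullet> y = x \<bullet> refl_vec a y"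
  by (simp add: refl_vec_def inner_diff_left inner_diff_right inner_commute algebra_simps)

lemma refl_vec_invol:
  assumes "a \<noteq> 0"
  shows "refl_vec a (refl_vec a x) = x"
proof -
  have "a \<bullet> a \<noteq> 0" using assms by simp
  then show ?thesis
    by (simp add: refl_vec_def inner_diff_left algebra_simps scaleR_diff_left[symmetric]
        flip: scaleR_add_left)
qed

lemma refl_vec_self:
  assumes "a \<noteq> 0"
  shows "refl_vec a a = - a"
proof -
  have "a \<bullet> a \<noteq> 0" using assms by simp
  then show ?thesis by (simp add: refl_vec_def algebra_simps scaleR_2)
qed

lemma refl_vec_hyp: "x \<in> hyp a \<Longrightarrow> refl_vec a x = x"
  by (simp add: refl_vec_def hyp_def)

lemma linear_refl_vec: "linear (refl_vec a)"
proof (rule linearI)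
  fix x y :: 'a and c :: real
  show "refl_vec a (x + y) = refl_vec a x + refl_vec a y"
    by (simp add: refl_vec_def inner_add_left add_divide_distrib scaleR_add_left algebra_simps)
  have "2 * (c * (x \<bullet> a)) / (a \<bullet> a) = c * (2 * (x \<bullet> a) / (a \<bullet> a))" by simp
  then show "refl_vec a (c *\<^sub>R x) = c *\<^sub>R refl_vec a x"
    by (simp add: refl_vec_def scaleR_diff_right)
qed

lemma refl_vec_sum: "refl_vec b (\<Sum>g\<in>S. c g *\<^sub>R g) = (\<Sum>g\<in>S. c g *\<^sub>R refl_vec b g)"
  using linear_refl_vec[of b] by (simp add: linear_sum linear_scale)

lemma inj_refl_vec: "a \<noteq> 0 \<Longrightarrow> inj (refl_vec a)"
  by (metis injI refl_vec_invol)

lemma mem_refl_vec_image_iff: "a \<noteq> 0 \<Longrightarrow> (x \<in> refl_vec a ` X) = (refl_vec a x \<in> X)"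
  by (metis image_iff refl_vec_invol)

lemma hyp_uminus[simp]: "hyp (- a) = hyp a"
  by (auto simp: hyp_def)

lemma root_system_refl: "root_system R \<Longrightarrow> a \<in> R \<Longrightarrow> b \<in> R \<Longrightarrow> refl_vec a b \<in> R"
  by (simp add: root_system_def)

lemma root_system_nonzero: "root_system R \<Longrightarrow> a \<in> R \<Longrightarrow> a \<noteq> 0"
  by (auto simp: root_system_def)

lemma root_system_finite: "root_system R \<Longrightarrow> finite R"
  by (simp add: root_system_def)

lemma root_system_uminus: "root_system R \<Longrightarrow> a \<in> R \<Longrightarrow> - a \<in> R"
  by (metis refl_vec_self root_system_nonzero root_system_refl)

lemma root_system_reduced:
  assumes "root_system R" "a \<in> R" "c *\<^sub>R a \<in> R"
  shows "c = 1 \<or> c = -1"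
proof -
  have h: "\<forall>a\<in>R. \<forall>c::real. c *\<^sub>R a \<in> R \<longrightarrow> c = 1 \<or> c = -1"
    using assms(1) unfolding root_system_def by (rule conjunct2[THEN conjunct2[THEN conjunct2]])
  show ?thesis using h assms(2,3) by blast
qed

lemma root_system_refl_image:
  assumes "root_system R" "a \<in> R"
  shows "refl_vec a ` R = R"
proof
  show "refl_vec a ` R \<subseteq> R" using root_system_refl[OF assms] by auto
  show "R \<subseteq> refl_vec a ` R"
  proof
    fix b assume "b \<in> R"
    have "refl_vec a (refl_vec a b) = b" by (rule refl_vec_invol[OF root_system_nonzero[OF assms]])
    moreover have "refl_vec a b \<in> R" by (rule root_system_refl[OF assms \<open>b \<in> R\<close>])
    ultimately show "b \<in> refl_vec a ` R" by (metis image_eqI)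
  qed
qed

lemma root_subsystem_root_system:
  assumes "root_system \<Phi>" "root_subsystem \<Phi> \<Psi>"
  shows "root_system \<Psi>"
  using assms unfolding root_system_def root_subsystem_def
  by (meson finite_subset subsetD)

section \<open>Chambers as sign cells\<close>

definition sign_cell :: "'a::euclidean_space set \<Rightarrow> 'a set \<Rightarrow> 'a set" where
  "sign_cell R P = {x. \<forall>a\<in>R. (a \<in> P \<longrightarrow> x \<bullet> a > 0) \<and> (a \<notin> P \<longrightarrow> x \<bullet> a < 0)}"

lemma convex_sign_cell: "convex (sign_cell R P)"
unfolding convex_def
proof (intro ballI allI impI)
  fix x y u v assume xy: "x \<in> sign_cell R P" "y \<in> sign_cell R P"
    and uv: "(0::real) \<le> u" "0 \<le> v" "u + v = 1"
  have h: "u * p + v * q > 0" if "p > 0" "q > 0" for p q :: real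
  proof (cases "u > 0")
    case True then show ?thesis using that uv by (simp add: add_pos_nonneg)
  next
    case False then show ?thesis using that uv by simp
  qed
  have h2: "u * p + v * q < 0" if "p < 0" "q < 0" for p q :: real
    using h[of "-p" "-q"] that by simp
  show "u *\<^sub>R x + v *\<^sub>R y \<in> sign_cell R P"
    using xy h h2 by (auto simp: sign_cell_def inner_add_left)
qed

lemma sign_cell_subset: "sign_cell R P \<subseteq> UNIV - (\<Union>a\<in>R. hyp a)"
  by (force simp: sign_cell_def hyp_def)

lemma chamber_inner_pos:
  assumes "C \<in> Ch R" "a \<in> R" "x \<in> C" "y \<in> C" "x \<bullet> a > 0"
  shows "y \<bullet> a > 0"
proof (rule ccontr)
  assume "\<not> y \<bullet> a > 0"
  then have "inner a y \<le> 0" "0 \<le> inner a x" using assms by (auto simp: inner_commute)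
  moreover have "connected C" using assms(1) by (simp add: Ch_def in_components_connected)
  ultimately obtain z where "z \<in> C" "inner a z = 0"
    using connected_ivt_hyperplane[of C y x a 0] assms by auto
  moreover have "C \<subseteq> UNIV - (\<Union>a\<in>R. hyp a)" using assms(1) by (simp add: Ch_def in_components_subset)
  ultimately show False using assms(2) by (auto simp: hyp_def inner_commute)
qed

lemma chamber_inner_nonzero: "C \<in> Ch R \<Longrightarrow> a \<in> R \<Longrightarrow> x \<in> C \<Longrightarrow> x \<bullet> a \<noteq> 0"
  using in_components_subset[of C] by (force simp: Ch_def hyp_def)

lemma chamber_nonempty: "C \<in> Ch R \<Longrightarrow> C \<noteq> {}"
  by (simp add: Ch_def in_components_nonempty)

lemma pos_roots_subset: "pos_roots R C \<subseteq> R" by (auto simp: pos_roots_def)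

lemma pos_roots_iff_inner:
  assumes "C \<in> Ch R" "a \<in> R" "x \<in> C"
  shows "a \<in> pos_roots R C \<longleftrightarrow> x \<bullet> a > 0"
proof
  assume "a \<in> pos_roots R C" then show "x \<bullet> a > 0" using assms(3) by (simp add: pos_roots_def)
next
  assume "x \<bullet> a > 0"
  then have "\<forall>e\<in>C. e \<bullet> a > 0" using chamber_inner_pos[OF assms(1,2,3)] by blast
  then show "a \<in> pos_roots R C" using assms(2) by (simp add: pos_roots_def)
qed

lemma chamber_eq_sign_cell:
  assumes "C \<in> Ch R"
  shows "C = sign_cell R (pos_roots R C)"
proof
  show "C \<subseteq> sign_cell R (pos_roots R C)"
  proof
    fix x assume x: "x \<in> C"
    have "(a \<in> pos_roots R C \<longrightarrow> x \<bullet> a > 0) \<and> (a \<notin> pos_roots R C \<longrightarrow> x \<bullet> a < 0)"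
      if "a \<in> R" for a
    proof -
      have "x \<bullet> a \<noteq> 0" by (rule chamber_inner_nonzero[OF assms that x])
      then show ?thesis using pos_roots_iff_inner[OF assms that x] by linarith
    qed
    then show "x \<in> sign_cell R (pos_roots R C)" unfolding sign_cell_def by blast
  qed
  then show "sign_cell R (pos_roots R C) \<subseteq> C"
    using components_maximal[of C "UNIV - (\<Union>a\<in>R. hyp a)" "sign_cell R (pos_roots R C)"]
      assms convex_connected[OF convex_sign_cell] sign_cell_subset chamber_nonempty
    by (metis Ch_def inf.absorb_iff1)
qed

lemma pos_roots_sign_cell:
  assumes "sign_cell R P \<noteq> {}" "P \<subseteq> R"
  shows "pos_roots R (sign_cell R P) = P"
proof -
  obtain x where x: "x \<in> sign_cell R P" using assms by auto
  show ?thesis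
  proof (intro equalityI subsetI)
    fix a assume a: "a \<in> pos_roots R (sign_cell R P)"
    then have "a \<in> R" "x \<bullet> a > 0" using x by (auto simp: pos_roots_def)
    then show "a \<in> P" using x by (auto simp: sign_cell_def)
  next
    fix a assume "a \<in> P" then show "a \<in> pos_roots R (sign_cell R P)"
      using assms by (auto simp: pos_roots_def sign_cell_def)
  qed
qed

lemma sign_cell_chamber:
  assumes "sign_cell R P \<noteq> {}" "P \<subseteq> R"
  shows "sign_cell R P \<in> Ch R"
proof -
  obtain x where x: "x \<in> sign_cell R P" using assms by auto
  let ?S = "UNIV - (\<Union>a\<in>R. hyp a)"
  define C0 where "C0 = connected_component_set ?S x"
  have xS: "x \<in> ?S" using x sign_cell_subset by blast
  have C0: "C0 \<in> Ch R" unfolding C0_def Ch_def using xS by (rule componentsI)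
  have xC0: "x \<in> C0" unfolding C0_def using xS by simp
  have "pos_roots R C0 = P"
  proof (intro equalityI subsetI)
    fix a assume a: "a \<in> pos_roots R C0"
    then have "a \<in> R" "x \<bullet> a > 0" using xC0 by (auto simp: pos_roots_def)
    then show "a \<in> P" using x by (auto simp: sign_cell_def)
  next
    fix a assume "a \<in> P"
    then have "a \<in> R" "x \<bullet> a > 0" using x assms by (auto simp: sign_cell_def)
    then show "a \<in> pos_roots R C0" using pos_roots_iff_inner[OF C0 _ xC0] by auto
  qed
  then have "C0 = sign_cell R P" using chamber_eq_sign_cell[OF C0] by metis
  then show ?thesis using C0 by simp
qed

lemma chamber_eqI:
  assumes "C1 \<in> Ch R" "C2 \<in> Ch R" "pos_roots R C1 = pos_roots R C2"
  shows "C1 = C2"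
proof -
  have "C1 = sign_cell R (pos_roots R C1)" by (rule chamber_eq_sign_cell[OF assms(1)])
  also have "\<dots> = sign_cell R (pos_roots R C2)" using assms(3) by (rule arg_cong)
  also have "\<dots> = C2" by (rule chamber_eq_sign_cell[OF assms(2), symmetric])
  finally show ?thesis .
qed

lemma uminus_pos_roots_iff:
  assumes "root_system R" "C \<in> Ch R" "a \<in> R"
  shows "- a \<in> pos_roots R C \<longleftrightarrow> a \<notin> pos_roots R C"
proof -
  obtain x where x: "x \<in> C" using chamber_nonempty[OF assms(2)] by auto
  show ?thesis
    using pos_roots_iff_inner[OF assms(2) _ x] root_system_uminus[OF assms(1,3)] assms(3)
      chamber_inner_nonzero[OF assms(2,3) x]
    by auto
qed

lemma mem_chamber_iff:
  assumes R: "root_system R" and C: "C \<in> Ch R"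
  shows "x \<in> C \<longleftrightarrow> (\<forall>b\<in>pos_roots R C. x \<bullet> b > 0)"
proof
  assume "\<forall>b\<in>pos_roots R C. x \<bullet> b > 0"
  then have "x \<in> sign_cell R (pos_roots R C)"
    using uminus_pos_roots_iff[OF R C] by (fastforce simp: sign_cell_def)
  then show "x \<in> C" using chamber_eq_sign_cell[OF C] by simp
qed (simp add: pos_roots_def)

lemma closure_chamber_inner_nonneg:
  assumes "C \<in> Ch R" "a \<in> pos_roots R C" "y \<in> closure C"
  shows "y \<bullet> a \<ge> 0"
proof -
  have "C \<subseteq> {y. inner a y \<ge> 0}" using assms(2)
    by (auto simp: pos_roots_def inner_commute less_imp_le)
  then have "closure C \<subseteq> {y. inner a y \<ge> 0}" by (intro closure_minimal closed_halfspace_ge)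
  then show ?thesis using assms(3) by (auto simp: inner_commute)
qed

lemma closure_chamber_inner_nonpos:
  assumes "C \<in> Ch R" "a \<in> R" "a \<notin> pos_roots R C" "y \<in> closure C"
  shows "y \<bullet> a \<le> 0"
proof -
  have "C \<subseteq> {y. inner a y \<le> 0}" using assms pos_roots_iff_inner[OF assms(1,2)]
    by (auto simp: inner_commute not_less)
  then have "closure C \<subseteq> {y. inner a y \<le> 0}" by (intro closure_minimal closed_halfspace_le)
  then show ?thesis using assms(4) by (auto simp: inner_commute)
qed

lemma closure_chamberI:
  assumes R: "root_system R" and C: "C \<in> Ch R" and z: "\<forall>b\<in>pos_roots R C. z \<bullet> b \<ge> 0"
  shows "z \<in> closure C"
  unfolding closure_approachable
proof (intro allI impI)
  fix e :: real assume e: "e > 0"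
  obtain x0 where x0: "x0 \<in> C" using chamber_nonempty[OF C] by blast
  define t where "t = e / (norm x0 + 1)"
  have t: "t > 0" using e by (simp add: t_def add_nonneg_pos)
  have "(z + t *\<^sub>R x0) \<bullet> b > 0" if "b \<in> pos_roots R C" for b
    using z that x0 t by (auto simp: inner_add_left pos_roots_def add_nonneg_pos)
  then have inC: "z + t *\<^sub>R x0 \<in> C" using mem_chamber_iff[OF R C] by blast
  have "dist (z + t *\<^sub>R x0) z = e * (norm x0 / (norm x0 + 1))"
    using e by (simp add: dist_norm t_def)
  also have "\<dots> < e * 1"
    using e by (intro mult_strict_left_mono) (simp_all add: add_nonneg_pos)
  finally show "\<exists>y\<in>C. dist y z < e" using inC by auto
qed

section \<open>Nonnegative combinations\<close>

definition nonneg_comb :: "'a::euclidean_space set \<Rightarrow> 'a \<Rightarrow> bool" where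
  "nonneg_comb S y \<longleftrightarrow> (\<exists>c. (\<forall>g\<in>S. c g \<ge> 0) \<and> y = (\<Sum>g\<in>S. c g *\<^sub>R g))"

lemma nonneg_comb_member:
  assumes "finite S" "s \<in> S"
  shows "nonneg_comb S s"
proof -
  have "(\<Sum>g\<in>S. (if g = s then 1 else 0) *\<^sub>R g) = s"
    using assms by (simp add: if_distrib[of "\<lambda>c. c *\<^sub>R _"] sum.delta' cong: if_cong)
  then show ?thesis unfolding nonneg_comb_def
    by (intro exI[of _ "\<lambda>g. if g = s then 1 else 0"]) auto
qed

lemma nonneg_comb_add:
  assumes "nonneg_comb S x" "nonneg_comb S y"
  shows "nonneg_comb S (x + y)"
proof -
  obtain c d where c: "\<forall>g\<in>S. c g \<ge> 0" "x = (\<Sum>g\<in>S. c g *\<^sub>R g)"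
    and d: "\<forall>g\<in>S. d g \<ge> 0" "y = (\<Sum>g\<in>S. d g *\<^sub>R g)" using assms by (auto simp: nonneg_comb_def)
  then have "x + y = (\<Sum>g\<in>S. (c g + d g) *\<^sub>R g)" by (simp add: sum.distrib scaleR_add_left)
  then show ?thesis unfolding nonneg_comb_def using c d by (intro exI[of _ "\<lambda>g. c g + d g"]) auto
qed

lemma nonneg_comb_scaleR:
  assumes "nonneg_comb S x" "t \<ge> 0"
  shows "nonneg_comb S (t *\<^sub>R x)"
proof -
  obtain c where c: "\<forall>g\<in>S. c g \<ge> 0" "x = (\<Sum>g\<in>S. c g *\<^sub>R g)" using assms
    by (auto simp: nonneg_comb_def)
  then have "t *\<^sub>R x = (\<Sum>g\<in>S. (t * c g) *\<^sub>R g)" by (simp add: scaleR_sum_right)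
  then show ?thesis unfolding nonneg_comb_def using c assms(2)
    by (intro exI[of _ "\<lambda>g. t * c g"]) auto
qed

lemma nonneg_comb_trans:
  assumes "\<forall>t\<in>T. nonneg_comb S t" "nonneg_comb T y"
  shows "nonneg_comb S y"
proof -
  obtain d where d: "\<forall>t\<in>T. d t \<ge> 0" "y = (\<Sum>t\<in>T. d t *\<^sub>R t)" using assms(2)
    by (auto simp: nonneg_comb_def)
  obtain c where c: "\<forall>t\<in>T. (\<forall>g\<in>S. c t g \<ge> 0) \<and> t = (\<Sum>g\<in>S. c t g *\<^sub>R g)"
    using assms(1) unfolding nonneg_comb_def by metis
  have "y = (\<Sum>t\<in>T. d t *\<^sub>R (\<Sum>g\<in>S. c t g *\<^sub>R g))"
    unfolding d(2) using c by (intro sum.cong) auto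
  also have "\<dots> = (\<Sum>t\<in>T. \<Sum>g\<in>S. (d t * c t g) *\<^sub>R g)" by (simp add: scaleR_sum_right)
  also have "\<dots> = (\<Sum>g\<in>S. \<Sum>t\<in>T. (d t * c t g) *\<^sub>R g)" by (rule sum.swap)
  also have "\<dots> = (\<Sum>g\<in>S. (\<Sum>t\<in>T. d t * c t g) *\<^sub>R g)" by (simp add: scaleR_sum_left)
  finally show ?thesis unfolding nonneg_comb_def using c d
    by (intro exI[of _ "\<lambda>g. \<Sum>t\<in>T. d t * c t g"]) (auto intro!: sum_nonneg)
qed

lemma nonneg_comb_inner_nonneg:
  assumes "\<forall>g\<in>S. x \<bullet> g \<ge> 0" "nonneg_comb S y" shows "x \<bullet> y \<ge> 0"
proof -
  obtain c where c: "\<forall>g\<in>S. c g \<ge> 0" "y = (\<Sum>g\<in>S. c g *\<^sub>R g)" using assms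
    by (auto simp: nonneg_comb_def)
  then have "x \<bullet> y = (\<Sum>g\<in>S. c g * (x \<bullet> g))" by (simp add: inner_sum_right)
  also have "\<dots> \<ge> 0" using c assms by (intro sum_nonneg) simp
  finally show ?thesis .
qed

lemma nonneg_comb_inner_pos:
  assumes "finite S" "\<forall>g\<in>S. x \<bullet> g > 0" "nonneg_comb S y" "y \<noteq> 0" shows "x \<bullet> y > 0"
proof -
  obtain c where c: "\<forall>g\<in>S. c g \<ge> 0" "y = (\<Sum>g\<in>S. c g *\<^sub>R g)" using assms
    by (auto simp: nonneg_comb_def)
  obtain g where g: "g \<in> S" "c g \<noteq> 0"
  proof (rule ccontr)
    assume "\<not> thesis"
    then have "\<forall>g\<in>S. c g = 0" using that by blast
    then have "y = 0" using c by simp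
    then show False using assms by simp
  qed
  have "x \<bullet> y = (\<Sum>g\<in>S. c g * (x \<bullet> g))" using c by (simp add: inner_sum_right)
  also have "\<dots> > 0"
    using c assms g by (intro sum_pos2[OF assms(1) g(1)]) (auto simp: less_imp_le less_le)
  finally show ?thesis .
qed

lemma nonneg_coeffs_eq_0:
  assumes "finite S" "\<forall>g\<in>S. x \<bullet> g > 0" "\<forall>v\<in>S. r v \<ge> 0" "(\<Sum>v\<in>S. r v *\<^sub>R v) = 0"
  shows "\<forall>v\<in>S. r v = 0"
proof -
  have "(\<Sum>v\<in>S. r v * (x \<bullet> v)) = x \<bullet> (\<Sum>v\<in>S. r v *\<^sub>R v)" by (simp add: inner_sum_right)
  also have "\<dots> = 0" using assms(4) by simp
  finally have "\<forall>v\<in>S. r v * (x \<bullet> v) = 0"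
    using sum_nonneg_eq_0_iff[OF assms(1), of "\<lambda>v. r v * (x \<bullet> v)"] assms(2,3)
    by (simp add: less_imp_le)
  then show ?thesis using assms(2) by (metis less_irrefl mult_eq_0_iff)
qed

definition obtuse :: "'a::euclidean_space set \<Rightarrow> bool" where
  "obtuse S \<longleftrightarrow> (\<forall>a\<in>S. \<forall>b\<in>S. a \<noteq> b \<longrightarrow> a \<bullet> b \<le> 0)"

text \<open>Write a vanishing combination u as the difference of its positive and negative parts p
  and q; then w = \<Sum> p(v) v = \<Sum> q(v) v, and obtuseness makes w \<bullet> w \<le> 0.\<close>
lemma obtuse_independent:
  assumes "finite S" "\<forall>g\<in>S. x \<bullet> g > 0" "obtuse S"
  shows "independent S"
proof -
  have "\<forall>v\<in>S. u v = 0" if u: "(\<Sum>v\<in>S. u v *\<^sub>R v) = 0" for u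
  proof -
    define p where "p v = max (u v) 0" for v
    define q where "q v = max (- u v) 0" for v
    have upq: "u v = p v - q v" and pq0: "p v * q v = 0" and p0: "p v \<ge> 0" "q v \<ge> 0" for v
      by (auto simp: p_def q_def max_def)
    define w where "w = (\<Sum>v\<in>S. p v *\<^sub>R v)"
    have wq: "w = (\<Sum>v\<in>S. q v *\<^sub>R v)"
      using u unfolding w_def by (simp add: upq scaleR_diff_left sum_subtractf)
    have "w \<bullet> w = (\<Sum>b\<in>S. \<Sum>a\<in>S. (p a * q b) * (a \<bullet> b))"
      by (subst (2) wq)
        (simp add: w_def inner_sum_left inner_sum_right sum_distrib_left algebra_simps)
    also have "\<dots> \<le> 0"
    proof (intro sum_nonpos)
      fix b a assume ab: "a \<in> S" "b \<in> S"
      show "(p a * q b) * (a \<bullet> b) \<le> 0"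
      proof (cases "a = b")
        case True
        then have "p a * q b = 0" using pq0[of b] by simp
        then show ?thesis by auto
      next
        case False
        then have "a \<bullet> b \<le> 0" using assms(3) ab by (auto simp: obtuse_def)
        then show ?thesis using p0 by (simp add: mult_nonneg_nonpos)
      qed
    qed
    finally have "w = 0" by (metis inner_gt_zero_iff not_le)
    then have "\<forall>v\<in>S. p v = 0" "\<forall>v\<in>S. q v = 0"
      using nonneg_coeffs_eq_0[OF assms(1,2)] p0 w_def wq by auto
    then show ?thesis by (simp add: upq)
  qed
  then show ?thesis using assms(1) by (auto simp: independent_explicit)
qed

lemma independent_sum_eq_member:
  fixes S :: "'a::euclidean_space set"
  assumes "finite S" "independent S" "a \<in> S" "(\<Sum>g\<in>S. e g *\<^sub>R g) = a" "g \<in> S"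
  shows "e g = (if g = a then 1 else 0)"
proof -
  have "(\<Sum>g\<in>S. (if g = a then 1 else 0) *\<^sub>R g) = a"
    using assms(1,3) by (simp add: if_distrib[of "\<lambda>c. c *\<^sub>R _"] sum.delta' cong: if_cong)
  then have "(\<Sum>g\<in>S. (e g - (if g = a then 1 else 0)) *\<^sub>R g) = 0"
    using assms(4) by (simp add: scaleR_diff_left sum_subtractf)
  then show ?thesis
    using assms(2,5) unfolding independent_explicit
    by (auto dest!: spec[of _ "\<lambda>g. e g - (if g = a then 1 else 0)"])
qed

text \<open>A vector of an independent set S is an extreme ray of the cone spanned by S.\<close>
lemma independent_extreme_ray:
  fixes S :: "'a::euclidean_space set"
  assumes finS: "finite S" and ind: "independent S" and aS: "a \<in> S" and finT: "finite T"
    and T: "\<forall>b\<in>T. nonneg_comb S b" and aT: "nonneg_comb T a"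
  shows "\<exists>b\<in>T. \<exists>k>0. b = k *\<^sub>R a"
proof -
  obtain c where c: "\<forall>b\<in>T. c b \<ge> 0" "a = (\<Sum>b\<in>T. c b *\<^sub>R b)"
    using aT by (auto simp: nonneg_comb_def)
  obtain d where d: "\<forall>b\<in>T. (\<forall>g\<in>S. d b g \<ge> 0) \<and> b = (\<Sum>g\<in>S. d b g *\<^sub>R g)"
    using T unfolding nonneg_comb_def by metis
  define e where "e g = (\<Sum>b\<in>T. c b * d b g)" for g
  have "a = (\<Sum>b\<in>T. c b *\<^sub>R (\<Sum>g\<in>S. d b g *\<^sub>R g))"
    unfolding c(2) using d by (intro sum.cong) auto
  also have "\<dots> = (\<Sum>b\<in>T. \<Sum>g\<in>S. (c b * d b g) *\<^sub>R g)" by (simp add: scaleR_sum_right)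
  also have "\<dots> = (\<Sum>g\<in>S. \<Sum>b\<in>T. (c b * d b g) *\<^sub>R g)" by (rule sum.swap)
  also have "\<dots> = (\<Sum>g\<in>S. e g *\<^sub>R g)" by (simp add: scaleR_sum_left e_def)
  finally have "(\<Sum>g\<in>S. e g *\<^sub>R g) = a" ..
  then have e_coord: "\<forall>g\<in>S. e g = (if g = a then 1 else 0)"
    using independent_sum_eq_member[OF finS ind aS] by blast
  have nn: "\<forall>b\<in>T. \<forall>g\<in>S. c b * d b g \<ge> 0" using c d by auto
  obtain b where b: "b \<in> T" "c b * d b a > 0"
  proof (rule ccontr)
    assume "\<not> thesis"
    then have "\<forall>b\<in>T. c b * d b a \<le> 0" using that by (meson not_le)
    then have "e a \<le> 0" unfolding e_def by (intro sum_nonpos) auto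
    then show False using e_coord aS by simp
  qed
  have "c b \<ge> 0" "d b a \<ge> 0" using c d b(1) aS by auto
  then have cb: "c b > 0" and dba: "d b a > 0" using b(2) by (auto simp: zero_less_mult_iff)
  have "d b g = 0" if g: "g \<in> S" "g \<noteq> a" for g
  proof -
    have "(\<Sum>b'\<in>T. c b' * d b' g) = 0" using e_coord g by (simp add: e_def)
    then have "\<forall>b'\<in>T. c b' * d b' g = 0"
      using sum_nonneg_eq_0_iff[OF finT, of "\<lambda>b'. c b' * d b' g"] nn g by simp
    then show ?thesis using b(1) cb by force
  qed
  then have "(\<Sum>g\<in>S - {a}. d b g *\<^sub>R g) = 0" by (intro sum.neutral) auto
  moreover have "b = d b a *\<^sub>R a + (\<Sum>g\<in>S - {a}. d b g *\<^sub>R g)"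
    using d b(1) finS aS by (simp add: sum.remove)
  ultimately have "b = d b a *\<^sub>R a" by simp
  then show ?thesis using b(1) dba by blast
qed

text \<open>Solving for d works because the coefficient t - c d must be positive: x0 pairs
  positively with the right-hand side.\<close>
lemma nonneg_comb_remove_redundant:
  assumes fin: "finite S" and pos: "\<forall>g\<in>S. x0 \<bullet> g > 0" and dS: "d \<in> S" and eS: "e \<in> S"
    and ed: "e \<noteq> d" and t: "t > 0" and s: "s > 0" and c: "\<forall>g\<in>S. c g \<ge> 0"
    and eq: "t *\<^sub>R d = s *\<^sub>R e + (\<Sum>g\<in>S. c g *\<^sub>R g)"
  shows "nonneg_comb (S - {d}) d"
proof -
  define v where "v = s *\<^sub>R e + (\<Sum>g\<in>S - {d}. c g *\<^sub>R g)"
  have sumS: "(\<Sum>g\<in>S. c g *\<^sub>R g) = c d *\<^sub>R d + (\<Sum>g\<in>S - {d}. c g *\<^sub>R g)"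
    using fin dS by (simp add: sum.remove)
  have v: "(t - c d) *\<^sub>R d = v" using eq sumS unfolding v_def
    by (simp add: scaleR_diff_left algebra_simps)
  have finD: "finite (S - {d})" using fin by simp
  have eD: "e \<in> S - {d}" using eS ed by simp
  have nv: "nonneg_comb (S - {d}) v" unfolding v_def
  proof (rule nonneg_comb_add)
    show "nonneg_comb (S - {d}) (s *\<^sub>R e)" using nonneg_comb_member[OF finD eD] s
      by (intro nonneg_comb_scaleR) auto
    show "nonneg_comb (S - {d}) (\<Sum>g\<in>S - {d}. c g *\<^sub>R g)" unfolding nonneg_comb_def using c by auto
  qed
  have posD: "\<forall>g\<in>S - {d}. x0 \<bullet> g > 0" using pos by auto
  have "x0 \<bullet> v \<ge> s * (x0 \<bullet> e)"
  proof -
    have "x0 \<bullet> (\<Sum>g\<in>S - {d}. c g *\<^sub>R g) \<ge> 0"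
      using nonneg_comb_inner_nonneg[of "S - {d}" x0] posD c unfolding nonneg_comb_def
      by (auto simp: less_imp_le)
    then show ?thesis unfolding v_def by (simp add: inner_add_right)
  qed
  moreover have "s * (x0 \<bullet> e) > 0" using s pos eS by simp
  ultimately have xv: "x0 \<bullet> v > 0" by linarith
  show ?thesis
  proof (cases "t - c d > 0")
    case True
    then have "d = (1 / (t - c d)) *\<^sub>R v" by (simp flip: v)
    then show ?thesis using nonneg_comb_scaleR[OF nv, of "1 / (t - c d)"] True by simp
  next
    case False
    have "x0 \<bullet> v = (t - c d) * (x0 \<bullet> d)" using v by (metis inner_scaleR_right)
    also have "\<dots> \<le> 0" using False pos dS by (simp add: mult_nonpos_nonneg less_imp_le)
    finally show ?thesis using xv by simp
  qed
qed

lemma ex_irredundant_nonneg_generators: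
  assumes "finite P"
  shows "\<exists>S\<subseteq>P. (\<forall>a\<in>P. nonneg_comb S a) \<and> (\<forall>b\<in>S. \<not> nonneg_comb (S - {b}) b)"
proof -
  define spans where "spans S \<longleftrightarrow> S \<subseteq> P \<and> (\<forall>a\<in>P. nonneg_comb S a)" for S
  have "spans P" unfolding spans_def using nonneg_comb_member[OF assms] by blast
  then obtain S where S: "spans S" and least: "\<And>T. spans T \<Longrightarrow> card S \<le> card T"
    using ex_has_least_nat[of spans P card] by blast
  have fin: "finite S" using S assms finite_subset by (auto simp: spans_def)
  have "\<not> nonneg_comb (S - {b}) b" if b: "b \<in> S" for b
  proof
    assume b_redundant: "nonneg_comb (S - {b}) b"
    have "nonneg_comb (S - {b}) s" if "s \<in> S" for s
      using b_redundant nonneg_comb_member[of "S - {b}" s] fin that by (cases "s = b") simp_all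
    then have "spans (S - {b})"
      using S nonneg_comb_trans[of S "S - {b}"] by (auto simp: spans_def)
    then have "card S \<le> card (S - {b})" by (rule least)
    with card_Diff1_less[OF fin b] show False by simp
  qed
  then show ?thesis using S by (auto simp: spans_def)
qed

section \<open>Simple systems\<close>

text \<open>If a \<bullet> b > 0 then the root s_a b = b - k a has k > 0; whichever of \<plusminus>s_a b is positive
  writes b or a as a nonnegative combination of the remaining generators.\<close>
lemma obtuse_if_irredundant:
  assumes R: "root_system R" and C: "C \<in> Ch R" and SP: "S \<subseteq> pos_roots R C" and fin: "finite S"
    and span: "\<forall>a\<in>pos_roots R C. nonneg_comb S a" and irred: "\<forall>b\<in>S. \<not> nonneg_comb (S - {b}) b"
  shows "obtuse S"
  unfolding obtuse_def
proof (intro ballI impI)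
  fix a b assume a: "a \<in> S" and b: "b \<in> S" and ab: "a \<noteq> b"
  obtain x0 where x0: "x0 \<in> C" using chamber_nonempty[OF C] by blast
  have pos: "\<forall>g\<in>S. x0 \<bullet> g > 0" using SP x0 by (auto simp: pos_roots_def)
  have aR: "a \<in> R" and bR: "b \<in> R" using a b SP pos_roots_subset by blast+
  show "a \<bullet> b \<le> 0"
  proof (rule ccontr)
    assume "\<not> a \<bullet> b \<le> 0"
    then have abp: "a \<bullet> b > 0" by simp
    have "a \<noteq> 0" using root_system_nonzero[OF R aR] .
    then have aa: "a \<bullet> a > 0" by simp
    define k where "k = 2 * (b \<bullet> a) / (a \<bullet> a)"
    have k: "k > 0" unfolding k_def using abp aa by (simp add: inner_commute)
    define r where "r = refl_vec a b"
    have r: "r = b - k *\<^sub>R a" unfolding r_def k_def refl_vec_def ..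
    have rR: "r \<in> R" unfolding r_def using root_system_refl[OF R aR bR] .
    show False
    proof (cases "r \<in> pos_roots R C")
      case True
      then obtain c where c: "\<forall>g\<in>S. c g \<ge> 0" "r = (\<Sum>g\<in>S. c g *\<^sub>R g)" using span
        by (auto simp: nonneg_comb_def)
      have "1 *\<^sub>R b = k *\<^sub>R a + (\<Sum>g\<in>S. c g *\<^sub>R g)" using c(2) r by (simp add: algebra_simps)
      then have "nonneg_comb (S - {b}) b"
        by (rule nonneg_comb_remove_redundant[OF fin pos b a ab zero_less_one k c(1)])
      then show False using irred b by blast
    next
      case False
      then have "- r \<in> pos_roots R C" using uminus_pos_roots_iff[OF R C rR] by simp
      then obtain c where c: "\<forall>g\<in>S. c g \<ge> 0" "- r = (\<Sum>g\<in>S. c g *\<^sub>R g)" using span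
        by (auto simp: nonneg_comb_def)
      have "k *\<^sub>R a = 1 *\<^sub>R b + (\<Sum>g\<in>S. c g *\<^sub>R g)" using c(2) r by (simp add: algebra_simps)
      then have "nonneg_comb (S - {a}) a"
        by (rule nonneg_comb_remove_redundant[OF fin pos a b ab[symmetric] k zero_less_one c(1)])
      then show False using irred a by blast
    qed
  qed
qed

lemma simple_systemI:
  assumes R: "root_system R" and C: "C \<in> Ch R" and SP: "S \<subseteq> pos_roots R C"
    and "finite S" "independent S" and span: "\<forall>a\<in>pos_roots R C. nonneg_comb S a"
  shows "simple_system R S"
  unfolding simple_system_def
proof (intro conjI ballI)
  show "S \<subseteq> R" using SP pos_roots_subset by blast
  show "finite S" "independent S" by fact+
  fix a assume aR: "a \<in> R"
  show "\<exists>c. a = (\<Sum>b\<in>S. c b *\<^sub>R b) \<and> ((\<forall>b\<in>S. 0 \<le> c b) \<or> (\<forall>b\<in>S. c b \<le> 0))"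
  proof (cases "a \<in> pos_roots R C")
    case True
    then show ?thesis using span by (auto simp: nonneg_comb_def)
  next
    case False
    then have "- a \<in> pos_roots R C" using uminus_pos_roots_iff[OF R C aR] by simp
    then obtain c where c: "\<forall>g\<in>S. c g \<ge> 0" "- a = (\<Sum>g\<in>S. c g *\<^sub>R g)"
      using span by (auto simp: nonneg_comb_def)
    then have "a = (\<Sum>g\<in>S. (- c g) *\<^sub>R g)" by (simp add: sum_negf flip: c(2))
    then show ?thesis using c(1) by (intro exI[of _ "\<lambda>g. - c g"]) auto
  qed
qed

lemma ex_obtuse_simple_system:
  assumes R: "root_system R" and C: "C \<in> Ch R"
  shows "\<exists>S. simple_system R S \<and> S \<subseteq> pos_roots R C \<and> obtuse S"
proof -
  have "finite (pos_roots R C)"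
    using root_system_finite[OF R] pos_roots_subset finite_subset by blast
  then obtain S where SP: "S \<subseteq> pos_roots R C" and span: "\<forall>a\<in>pos_roots R C. nonneg_comb S a"
    and irred: "\<forall>b\<in>S. \<not> nonneg_comb (S - {b}) b"
    using ex_irredundant_nonneg_generators by blast
  have fin: "finite S" using SP \<open>finite (pos_roots R C)\<close> finite_subset by blast
  have ob: "obtuse S" by (rule obtuse_if_irredundant[OF R C SP fin span irred])
  obtain x0 where x0: "x0 \<in> C" using chamber_nonempty[OF C] by blast
  have "\<forall>g\<in>S. x0 \<bullet> g > 0" using SP x0 by (auto simp: pos_roots_def)
  then have "independent S" by (rule obtuse_independent[OF fin _ ob])
  then show ?thesis using simple_systemI[OF R C SP fin _ span] SP ob by blast
qed

lemma nonneg_comb_simple_roots: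
  assumes C: "C \<in> Ch R" and S: "simple_system R S" "S \<subseteq> pos_roots R C" and a: "a \<in> pos_roots R C"
  shows "nonneg_comb S a"
proof -
  have aR: "a \<in> R" using a by (simp add: pos_roots_def)
  obtain c where c: "a = (\<Sum>b\<in>S. c b *\<^sub>R b)" "(\<forall>b\<in>S. 0 \<le> c b) \<or> (\<forall>b\<in>S. c b \<le> 0)"
    using S(1) aR unfolding simple_system_def by blast
  show ?thesis
  proof (cases "\<forall>b\<in>S. 0 \<le> c b")
    case True then show ?thesis using c by (auto simp: nonneg_comb_def)
  next
    case False
    then have cn: "\<forall>b\<in>S. c b \<le> 0" using c by blast
    obtain x0 where x0: "x0 \<in> C" using chamber_nonempty[OF C] by blast
    have "x0 \<bullet> a = (\<Sum>b\<in>S. c b * (x0 \<bullet> b))" using c(1) by (simp add: inner_sum_right)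
    also have "\<dots> \<le> 0"
    proof (intro sum_nonpos)
      fix b assume b: "b \<in> S"
      then have "c b \<le> 0" "x0 \<bullet> b > 0" using cn S(2) x0 by (auto simp: pos_roots_def)
      then show "c b * (x0 \<bullet> b) \<le> 0" by (simp add: mult_nonpos_nonneg)
    qed
    finally show ?thesis using a x0 by (auto simp: pos_roots_def)
  qed
qed

lemma simple_system_subset:
  assumes R: "root_system R" and C: "C \<in> Ch R"
    and S1: "simple_system R S1" "S1 \<subseteq> pos_roots R C"
    and S2: "simple_system R S2" "S2 \<subseteq> pos_roots R C"
  shows "S1 \<subseteq> S2"
proof
  fix a assume aS1: "a \<in> S1"
  have "\<exists>b\<in>S2. \<exists>k>0. b = k *\<^sub>R a"
  proof (rule independent_extreme_ray)
    show "finite S1" "independent S1" "finite S2" using S1 S2 by (auto simp: simple_system_def)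
    show "\<forall>b\<in>S2. nonneg_comb S1 b" using nonneg_comb_simple_roots[OF C S1] S2(2) by blast
    show "nonneg_comb S2 a" using nonneg_comb_simple_roots[OF C S2] aS1 S1(2) by blast
  qed fact
  then obtain b k where b: "b \<in> S2" "k > 0" "b = k *\<^sub>R a" by blast
  have "a \<in> R" "b \<in> R" using aS1 b(1) S1 S2 by (auto simp: simple_system_def)
  then have "k = 1 \<or> k = -1" using root_system_reduced[OF R, of a k] b(3) by simp
  then have "k = 1" using b(2) by auto
  then show "a \<in> S2" using b by simp
qed

lemma simple_roots_eqI:
  assumes R: "root_system R" and C: "C \<in> Ch R" and S: "simple_system R S" "S \<subseteq> pos_roots R C"
  shows "simple_roots R C = S"
  unfolding simple_roots_def
proof (rule the_equality)
  show "simple_system R S \<and> S \<subseteq> pos_roots R C" using S by simp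
  fix T assume "simple_system R T \<and> T \<subseteq> pos_roots R C"
  then show "T = S" using simple_system_subset[OF R C] S by blast
qed

lemma simple_roots_props:
  assumes R: "root_system R" and C: "C \<in> Ch R"
  shows "simple_system R (simple_roots R C)" "simple_roots R C \<subseteq> pos_roots R C"
    "obtuse (simple_roots R C)"
proof -
  obtain S where S: "simple_system R S" "S \<subseteq> pos_roots R C" "obtuse S"
    using ex_obtuse_simple_system[OF R C] by blast
  have "simple_roots R C = S" by (rule simple_roots_eqI[OF R C S(1,2)])
  then show "simple_system R (simple_roots R C)" "simple_roots R C \<subseteq> pos_roots R C"
    "obtuse (simple_roots R C)" using S by simp_all
qed

section \<open>Walls\<close>

definition wall :: "'a::euclidean_space set \<Rightarrow> 'a \<Rightarrow> bool" where
  "wall C a \<longleftrightarrow> (\<exists>U. openin (top_of_set (hyp a)) U \<and> U \<noteq> {} \<and> U \<subseteq> closure C \<inter> hyp a)"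

lemma wall_uminus: "wall C (- a) = wall C a"
  by (simp add: wall_def hyp_uminus)

lemma hyp_subset_if_openin:
  assumes U: "openin (top_of_set (hyp a)) U" "U \<noteq> {}" "U \<subseteq> hyp g"
  shows "hyp a \<subseteq> hyp g"
proof
  obtain u where u: "u \<in> U" using U by auto
  obtain e where e: "e > 0" "\<forall>x'\<in>hyp a. dist x' u < e \<longrightarrow> x' \<in> U"
    using U(1) u unfolding openin_euclidean_subtopology_iff by blast
  have uh: "u \<in> hyp a" "u \<in> hyp g" using U u openin_imp_subset by blast+
  fix w assume w: "w \<in> hyp a"
  show "w \<in> hyp g"
  proof (cases "w = 0")
    case True then show ?thesis by (simp add: hyp_def)
  next
    case False
    define t where "t = e / (2 * norm w)"
    have t: "t > 0" using e False by (simp add: t_def)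
    have "u + t *\<^sub>R w \<in> hyp a" using uh w by (simp add: hyp_def inner_add_left)
    moreover have "dist (u + t *\<^sub>R w) u < e"
      using t e False by (simp add: dist_norm t_def)
    ultimately have "u + t *\<^sub>R w \<in> U" using e by blast
    then have "(u + t *\<^sub>R w) \<bullet> g = 0" using U(3) by (auto simp: hyp_def)
    then have "t * (w \<bullet> g) = 0" using uh by (simp add: hyp_def inner_add_left)
    then show ?thesis using t by (simp add: hyp_def)
  qed
qed

lemma hyp_subset_imp_parallel:
  assumes "a \<noteq> 0" "hyp a \<subseteq> hyp g"
  shows "g = (g \<bullet> a / (a \<bullet> a)) *\<^sub>R a"
proof -
  define v where "v = g - (g \<bullet> a / (a \<bullet> a)) *\<^sub>R a"
  have aa: "a \<bullet> a \<noteq> 0" using assms by simp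
  have va: "v \<bullet> a = 0" using aa by (simp add: v_def inner_diff_left)
  then have "v \<in> hyp g" using assms by (auto simp: hyp_def)
  then have vg: "v \<bullet> g = 0" by (simp add: hyp_def)
  have "v \<bullet> v = v \<bullet> g - (g \<bullet> a / (a \<bullet> a)) * (v \<bullet> a)"
    by (simp add: v_def inner_diff_right)
  then have "v \<bullet> v = 0" using va vg by simp
  then have "v = 0" by simp
  then show ?thesis by (simp add: v_def)
qed

lemma root_eq_if_hyp_subset:
  assumes R: "root_system R" and a: "a \<in> R" and g: "g \<in> R" and h: "hyp a \<subseteq> hyp g"
  shows "g = a \<or> g = - a"
proof -
  define k where "k = g \<bullet> a / (a \<bullet> a)"
  have gk: "g = k *\<^sub>R a" unfolding k_def
    by (rule hyp_subset_imp_parallel[OF root_system_nonzero[OF R a] h])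
  then have "k = 1 \<or> k = -1" using root_system_reduced[OF R a] g by metis
  then show ?thesis using gk by (metis scaleR_minus1_left scaleR_one)
qed

text \<open>Every simple root g occurring in a vanishes on the face of C in hyp a, so hyp g contains an
  open piece of hyp a; reducedness then forces g = a.\<close>
lemma wall_pos_root_simple:
  assumes R: "root_system R" and C: "C \<in> Ch R" and a: "a \<in> pos_roots R C" and w: "wall C a"
  shows "a \<in> simple_roots R C"
proof -
  let ?S = "simple_roots R C"
  have S: "simple_system R ?S" "?S \<subseteq> pos_roots R C" using simple_roots_props[OF R C] by auto
  have aR: "a \<in> R" using a pos_roots_subset by blast
  have fin: "finite ?S" using S by (simp add: simple_system_def)
  obtain c where c: "\<forall>g\<in>?S. c g \<ge> 0" "a = (\<Sum>g\<in>?S. c g *\<^sub>R g)"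
    using nonneg_comb_simple_roots[OF C S a] by (auto simp: nonneg_comb_def)
  obtain g where g: "g \<in> ?S" "c g \<noteq> 0"
  proof (rule ccontr)
    assume "\<not> thesis"
    then have "\<forall>g\<in>?S. c g = 0" using that by blast
    then have "a = 0" using c by simp
    then show False using root_system_nonzero[OF R aR] by simp
  qed
  have cg: "c g > 0" using g c by force
  obtain U where U: "openin (top_of_set (hyp a)) U" "U \<noteq> {}" "U \<subseteq> closure C \<inter> hyp a"
    using w by (auto simp: wall_def)
  have "U \<subseteq> hyp g"
  proof
    fix y assume y: "y \<in> U"
    then have yc: "y \<in> closure C" and ya: "y \<bullet> a = 0" using U by (auto simp: hyp_def)
    have nn: "\<forall>h\<in>?S. c h * (y \<bullet> h) \<ge> 0" using closure_chamber_inner_nonneg[OF C _ yc] S(2) c(1)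
      by auto
    have "y \<bullet> a = (\<Sum>h\<in>?S. c h * (y \<bullet> h))" by (subst c(2)) (simp add: inner_sum_right)
    then have "(\<Sum>h\<in>?S. c h * (y \<bullet> h)) = 0" using ya by simp
    then have "\<forall>h\<in>?S. c h * (y \<bullet> h) = 0"
      using sum_nonneg_eq_0_iff[OF fin, of "\<lambda>h. c h * (y \<bullet> h)"] nn by simp
    then have "c g * (y \<bullet> g) = 0" using g by blast
    then show "y \<in> hyp g" using cg by (simp add: hyp_def)
  qed
  then have "hyp a \<subseteq> hyp g" using hyp_subset_if_openin U by blast
  moreover have gR: "g \<in> R" using g S(2) pos_roots_subset by blast
  ultimately have "g = a \<or> g = - a" using root_eq_if_hyp_subset[OF R aR] by blast
  moreover have "- a \<notin> pos_roots R C" using uminus_pos_roots_iff[OF R C aR] a by simp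
  ultimately have "g = a" using g S(2) by auto
  then show ?thesis using g by simp
qed

lemma wall_imp_simple:
  assumes R: "root_system R" and C: "C \<in> Ch R" and a: "a \<in> R" and w: "wall C a"
  shows "a \<in> simple_roots R C \<or> - a \<in> simple_roots R C"
proof (cases "a \<in> pos_roots R C")
  case True then show ?thesis using wall_pos_root_simple[OF R C _ w] by simp
next
  case False
  then have "- a \<in> pos_roots R C" using uminus_pos_roots_iff[OF R C a] by simp
  then show ?thesis using wall_pos_root_simple[OF R C _] w wall_uminus by metis
qed

text \<open>The projection of a point of C to the hyperplane of a stays strictly positive on the
  other simple roots because they are obtuse to a.\<close>
lemma simple_root_wall:
  assumes R: "root_system R" and C: "C \<in> Ch R" and aS: "a \<in> simple_roots R C"
  shows "wall C a"
proof -
  let ?S = "simple_roots R C"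
  have S: "simple_system R ?S" "?S \<subseteq> pos_roots R C" "obtuse ?S"
    using simple_roots_props[OF R C] by auto
  have aP: "a \<in> pos_roots R C" using aS S by blast
  have aa: "a \<bullet> a > 0" using root_system_nonzero[OF R] aP pos_roots_subset by auto
  obtain x0 where x0: "x0 \<in> C" using chamber_nonempty[OF C] by blast
  define k where "k = x0 \<bullet> a / (a \<bullet> a)"
  have k: "k > 0" using x0 aP aa by (simp add: k_def pos_roots_def)
  define V where "V = (\<Inter>d\<in>?S - {a}. {z. d \<bullet> z > 0})"
  define U where "U = hyp a \<inter> V"
  have "open V"
    unfolding V_def using S(1)
      by (intro open_INT) (auto intro: open_halfspace_gt simp: simple_system_def)
  then have U_open: "openin (top_of_set (hyp a)) U" unfolding U_def by (rule openin_open_Int)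
  have "x0 - k *\<^sub>R a \<in> U"
  proof -
    have "d \<bullet> (x0 - k *\<^sub>R a) > 0" if d: "d \<in> ?S - {a}" for d
    proof -
      have "a \<bullet> d \<le> 0" using S(3) d aS by (auto simp: obtuse_def)
      moreover have "x0 \<bullet> d > 0" using x0 d S(2) by (auto simp: pos_roots_def)
      moreover have "k * (a \<bullet> d) \<le> 0" using k calculation(1) by (simp add: mult_nonneg_nonpos)
      ultimately show ?thesis by (simp add: inner_diff_right inner_commute)
    qed
    moreover have "x0 - k *\<^sub>R a \<in> hyp a" using aa by (simp add: hyp_def k_def inner_diff_left)
    ultimately show ?thesis by (auto simp: U_def V_def)
  qed
  moreover have "U \<subseteq> closure C"
  proof
    fix z assume z: "z \<in> U"
    have "z \<bullet> g \<ge> 0" if "g \<in> ?S" for g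
      using z that by (cases "g = a") (auto simp: U_def V_def hyp_def inner_commute less_imp_le)
    then have "\<forall>b\<in>pos_roots R C. z \<bullet> b \<ge> 0"
      using nonneg_comb_simple_roots[OF C S(1,2)] nonneg_comb_inner_nonneg by blast
    then show "z \<in> closure C" by (rule closure_chamberI[OF R C])
  qed
  ultimately show ?thesis unfolding wall_def using U_open U_def by blast
qed

lemma connected_through_commute: "connected_through C D L = connected_through D C L"
  unfolding connected_through_def by (simp add: Int_commute Int_left_commute)

lemma connected_through_wall: "connected_through C D (hyp a) \<Longrightarrow> wall C a"
  unfolding connected_through_def wall_def by blast

lemma wall_connected_through_self: "wall C a \<Longrightarrow> connected_through C C (hyp a)"
  unfolding connected_through_def wall_def by blast

lemma wall_connected_through_refl:
  assumes "wall C a" "a \<noteq> 0"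
  shows "connected_through C (refl_vec a ` C) (hyp a)"
proof -
  obtain U where U: "openin (top_of_set (hyp a)) U" "U \<noteq> {}" "U \<subseteq> closure C \<inter> hyp a"
    using assms by (auto simp: wall_def)
  have "U \<subseteq> closure (refl_vec a ` C)"
  proof
    fix u assume u: "u \<in> U"
    then have "u = refl_vec a u" using U refl_vec_hyp by (metis Int_iff subsetD)
    also have "\<dots> \<in> refl_vec a ` closure C" using u U by blast
    also have "\<dots> \<subseteq> closure (refl_vec a ` C)"
      by (rule closure_linear_image_subset[OF linear_refl_vec])
    finally show "u \<in> closure (refl_vec a ` C)" .
  qed
  then show ?thesis unfolding connected_through_def using U by blast
qed

section \<open>Reflected chambers and adjacency\<close>

lemma refl_vec_image_sign_cell:
  assumes R: "root_system R" and b: "b \<in> R"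
  shows "refl_vec b ` sign_cell R P = sign_cell R (refl_vec b ` P)"
proof (rule set_eqI)
  fix y
  have b0: "b \<noteq> 0" using root_system_nonzero[OF R b] .
  have "y \<in> refl_vec b ` sign_cell R P \<longleftrightarrow> (\<forall>a\<in>refl_vec b ` R.
      (a \<in> P \<longrightarrow> refl_vec b y \<bullet> a > 0) \<and> (a \<notin> P \<longrightarrow> refl_vec b y \<bullet> a < 0))"
    using root_system_refl_image[OF R b] mem_refl_vec_image_iff[OF b0] by (simp add: sign_cell_def)
  also have "\<dots> \<longleftrightarrow> y \<in> sign_cell R (refl_vec b ` P)"
    by (simp add: sign_cell_def refl_vec_adj refl_vec_invol[OF b0] mem_refl_vec_image_iff[OF b0])
  finally show "y \<in> refl_vec b ` sign_cell R P \<longleftrightarrow> y \<in> sign_cell R (refl_vec b ` P)" .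
qed

lemma refl_vec_image_chamber:
  assumes R: "root_system R" and b: "b \<in> R" and C: "C \<in> Ch R"
  shows "refl_vec b ` C \<in> Ch R" "pos_roots R (refl_vec b ` C) = refl_vec b ` pos_roots R C"
proof -
  let ?f = "refl_vec b"
  let ?P = "pos_roots R C"
  have eq: "?f ` C = sign_cell R (?f ` ?P)"
    using refl_vec_image_sign_cell[OF R b, of ?P] chamber_eq_sign_cell[OF C] by simp
  have sub: "?f ` ?P \<subseteq> R" using root_system_refl_image[OF R b] pos_roots_subset by blast
  have ne: "sign_cell R (?f ` ?P) \<noteq> {}" using eq chamber_nonempty[OF C] by auto
  show "?f ` C \<in> Ch R" using sign_cell_chamber[OF ne sub] eq by simp
  show "pos_roots R (?f ` C) = ?f ` ?P" using pos_roots_sign_cell[OF ne sub] eq by simp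
qed

lemma simple_system_refl_vec_image:
  assumes R: "root_system R" and b: "b \<in> R" and S: "simple_system R S"
  shows "simple_system R (refl_vec b ` S)"
  unfolding simple_system_def
proof (intro conjI ballI)
  let ?f = "refl_vec b"
  have b0: "b \<noteq> 0" using root_system_nonzero[OF R b] .
  have inj: "inj_on ?f S" using inj_refl_vec[OF b0] by (rule inj_on_subset) simp
  have fin: "finite S" and ind: "independent S" and SR: "S \<subseteq> R"
    using S by (auto simp: simple_system_def)
  show "?f ` S \<subseteq> R" using SR root_system_refl_image[OF R b] by blast
  show "finite (?f ` S)" using fin by simp
  show "independent (?f ` S)"
    by (rule linear_independent_injective_image[OF linear_refl_vec ind])
      (rule inj_on_subset[OF inj_refl_vec[OF b0] subset_UNIV])
  fix a assume aR: "a \<in> R"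
  obtain c where c: "?f a = (\<Sum>g\<in>S. c g *\<^sub>R g)" "(\<forall>g\<in>S. 0 \<le> c g) \<or> (\<forall>g\<in>S. c g \<le> 0)"
    using S root_system_refl[OF R b aR] unfolding simple_system_def by blast
  have "a = ?f (?f a)" using refl_vec_invol[OF b0] by simp
  also have "\<dots> = (\<Sum>g\<in>S. c g *\<^sub>R ?f g)" unfolding c(1) by (rule refl_vec_sum)
  also have "\<dots> = (\<Sum>h\<in>?f ` S. c (?f h) *\<^sub>R h)"
    by (subst sum.reindex[OF inj]) (simp add: refl_vec_invol[OF b0])
  finally have "a = (\<Sum>h\<in>?f ` S. c (?f h) *\<^sub>R h)" .
  moreover have "(\<forall>h\<in>?f ` S. 0 \<le> c (?f h)) \<or> (\<forall>h\<in>?f ` S. c (?f h) \<le> 0)"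
    using c(2) refl_vec_invol[OF b0] by auto
  ultimately show "\<exists>c. a = (\<Sum>h\<in>?f ` S. c h *\<^sub>R h) \<and>
      ((\<forall>h\<in>?f ` S. 0 \<le> c h) \<or> (\<forall>h\<in>?f ` S. c h \<le> 0))"
    by (intro exI[of _ "\<lambda>h. c (?f h)"] conjI)
qed

lemma simple_roots_refl_vec_image:
  assumes R: "root_system R" and b: "b \<in> R" and C: "C \<in> Ch R"
  shows "simple_roots R (refl_vec b ` C) = refl_vec b ` simple_roots R C"
proof (rule simple_roots_eqI[OF R refl_vec_image_chamber(1)[OF R b C]])
  show "simple_system R (refl_vec b ` simple_roots R C)"
    by (rule simple_system_refl_vec_image[OF R b simple_roots_props(1)[OF R C]])
  show "refl_vec b ` simple_roots R C \<subseteq> pos_roots R (refl_vec b ` C)"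
    using refl_vec_image_chamber(2)[OF R b C] simple_roots_props(2)[OF R C] by auto
qed

lemma lifts_chamber_refl_vec_image:
  assumes Phi: "root_system \<Phi>" and sub: "root_subsystem \<Phi> \<Psi>" and b: "b \<in> \<Psi>"
    and C: "C \<in> Ch \<Phi>" and D: "D \<in> Ch \<Psi>" and L: "lifts_chamber \<Phi> \<Psi> C D"
  shows "lifts_chamber \<Phi> \<Psi> (refl_vec b ` C) (refl_vec b ` D)"
proof -
  have Psi: "root_system \<Psi>" by (rule root_subsystem_root_system[OF Phi sub])
  have bP: "b \<in> \<Phi>" using b sub by (auto simp: root_subsystem_def)
  show ?thesis using L unfolding lifts_chamber_def
    simple_roots_refl_vec_image[OF Psi b D] simple_roots_refl_vec_image[OF Phi bP C] by blast
qed

lemma pos_roots_across_wall: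
  assumes R: "root_system R" and C: "C \<in> Ch R" and C': "C' \<in> Ch R" and b: "b \<in> R"
    and ct: "connected_through C C' (hyp b)" and g: "g \<in> R" "g \<noteq> b" "g \<noteq> - b"
  shows "g \<in> pos_roots R C \<longleftrightarrow> g \<in> pos_roots R C'"
proof -
  obtain U where U: "openin (top_of_set (hyp b)) U" "U \<noteq> {}" "U \<subseteq> closure C \<inter> closure C' \<inter> hyp b"
    using ct by (auto simp: connected_through_def)
  have "\<not> U \<subseteq> hyp g"
  proof
    assume "U \<subseteq> hyp g"
    then have "hyp b \<subseteq> hyp g" using hyp_subset_if_openin[OF U(1,2)] by blast
    then show False using root_eq_if_hyp_subset[OF R b g(1)] g by blast
  qed
  then obtain u where u: "u \<in> U" "u \<bullet> g \<noteq> 0" by (auto simp: hyp_def)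
  have key: "g \<in> pos_roots R X \<longleftrightarrow> u \<bullet> g > 0" if X: "X \<in> Ch R" "u \<in> closure X" for X
  proof
    assume "g \<in> pos_roots R X"
    then show "u \<bullet> g > 0" using closure_chamber_inner_nonneg[OF X(1) _ X(2)] u(2) by force
  next
    assume "u \<bullet> g > 0"
    then show "g \<in> pos_roots R X" using closure_chamber_inner_nonpos[OF X(1) g(1) _ X(2)] by force
  qed
  show ?thesis using key[OF C] key[OF C'] u U by blast
qed

lemma chamber_across_wall_eqI:
  assumes R: "root_system R" and b: "b \<in> R" and C: "C \<in> Ch R" and C1: "C1 \<in> Ch R"
    and C2: "C2 \<in> Ch R"
    and ct1: "connected_through C C1 (hyp b)" and ct2: "connected_through C C2 (hyp b)"
    and bb: "b \<in> pos_roots R C1 \<longleftrightarrow> b \<in> pos_roots R C2"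
  shows "C1 = C2"
proof (rule chamber_eqI[OF C1 C2])
  have "g \<in> pos_roots R C1 \<longleftrightarrow> g \<in> pos_roots R C2" if g: "g \<in> R" for g
  proof -
    consider "g = b" | "g = - b" | "g \<noteq> b \<and> g \<noteq> - b" by blast
    then show ?thesis
    proof cases
      case 1 then show ?thesis using bb by simp
    next
      case 2 then show ?thesis
        using uminus_pos_roots_iff[OF R C1 b] uminus_pos_roots_iff[OF R C2 b] bb by simp
    next
      case 3 then show ?thesis
        using pos_roots_across_wall[OF R C C1 b ct1 g] pos_roots_across_wall[OF R C C2 b ct2 g]
          by simp
    qed
  qed
  then show "pos_roots R C1 = pos_roots R C2" using pos_roots_subset by blast
qed

lemma chamber_across_wall_cases:
  assumes R: "root_system R" and D: "D \<in> Ch R" and D': "D' \<in> Ch R" and b: "b \<in> R"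
    and ct: "connected_through D D' (hyp b)"
  shows "D' = D \<or> D' = refl_vec b ` D"
proof (cases "D' = D")
  case False
  have b0: "b \<noteq> 0" using root_system_nonzero[OF R b] .
  have wD: "wall D b" by (rule connected_through_wall[OF ct])
  have "b \<in> pos_roots R D' \<longleftrightarrow> b \<notin> pos_roots R D"
    using chamber_across_wall_eqI[OF R b D D' D ct wall_connected_through_self[OF wD]] False
    by blast
  moreover have "b \<in> pos_roots R (refl_vec b ` D) \<longleftrightarrow> b \<notin> pos_roots R D"
    unfolding refl_vec_image_chamber(2)[OF R b D] mem_refl_vec_image_iff[OF b0]
    using uminus_pos_roots_iff[OF R D b] refl_vec_self[OF b0] by simp
  ultimately show ?thesis
    using chamber_across_wall_eqI[OF R b D D' refl_vec_image_chamber(1)[OF R b D] ct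
        wall_connected_through_refl[OF wD b0]]
    by blast
qed simp

section \<open>Lifting a single step\<close>

lemma lifting_chamber_subset:
  assumes Phi: "root_system \<Phi>" and sub: "root_subsystem \<Phi> \<Psi>"
    and C: "C \<in> Ch \<Phi>" and D: "D \<in> Ch \<Psi>" and L: "lifts_chamber \<Phi> \<Psi> C D"
  shows "C \<subseteq> D"
proof
  fix x assume x: "x \<in> C"
  have Psi: "root_system \<Psi>" by (rule root_subsystem_root_system[OF Phi sub])
  let ?SD = "simple_roots \<Psi> D"
  have SD: "simple_system \<Psi> ?SD" "?SD \<subseteq> pos_roots \<Psi> D" using simple_roots_props[OF Psi D] by auto
  have fin: "finite ?SD" using SD by (simp add: simple_system_def)
  have xS: "\<forall>g\<in>?SD. x \<bullet> g > 0"
    using L simple_roots_props(2)[OF Phi C] x unfolding lifts_chamber_def pos_roots_def by blast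
  have "x \<bullet> a > 0" if a: "a \<in> pos_roots \<Psi> D" for a
  proof -
    have "a \<in> \<Psi>" using a pos_roots_subset by blast
    then have "a \<noteq> 0" using root_system_nonzero[OF Psi] by blast
    then show ?thesis using nonneg_comb_inner_pos[OF fin xS nonneg_comb_simple_roots[OF D SD a]]
      by simp
  qed
  then show "x \<in> D" using mem_chamber_iff[OF Psi D] by blast
qed

lemma pos_roots_lifting_iff:
  assumes C: "C \<in> Ch \<Phi>" and D: "D \<in> Ch \<Psi>" and CD: "C \<subseteq> D" and b: "b \<in> \<Psi>" "b \<in> \<Phi>"
  shows "b \<in> pos_roots \<Phi> C \<longleftrightarrow> b \<in> pos_roots \<Psi> D"
proof -
  obtain x where x: "x \<in> C" using chamber_nonempty[OF C] by blast
  show ?thesis using pos_roots_iff_inner[OF C b(2) x] pos_roots_iff_inner[OF D b(1)] x CD by blast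
qed

lemma wall_of_lifting_chamber:
  assumes Phi: "root_system \<Phi>" and sub: "root_subsystem \<Phi> \<Psi>" and C: "C \<in> Ch \<Phi>"
    and D: "D \<in> Ch \<Psi>" and L: "lifts_chamber \<Phi> \<Psi> C D" and b: "b \<in> \<Psi>" and w: "wall D b"
  shows "wall C b"
proof -
  have "b \<in> simple_roots \<Psi> D \<or> - b \<in> simple_roots \<Psi> D"
    by (rule wall_imp_simple[OF root_subsystem_root_system[OF Phi sub] D b w])
  then have "b \<in> simple_roots \<Phi> C \<or> - b \<in> simple_roots \<Phi> C"
    using L by (auto simp: lifts_chamber_def)
  then show ?thesis using simple_root_wall[OF Phi C] wall_uminus by metis
qed

lemma ex1_lift_step:
  assumes Phi: "root_system \<Phi>" and sub: "root_subsystem \<Phi> \<Psi>"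
    and D: "D \<in> Ch \<Psi>" and D': "D' \<in> Ch \<Psi>" and b: "b \<in> \<Psi>"
    and ct: "connected_through D D' (hyp b)"
    and C: "C \<in> Ch \<Phi>" and L: "lifts_chamber \<Phi> \<Psi> C D"
  shows "\<exists>!C'. (C' \<in> Ch \<Phi> \<and> lifts_chamber \<Phi> \<Psi> C' D') \<and> connected_through C C' (hyp b)"
proof (rule ex_ex1I)
  have Psi: "root_system \<Psi>" by (rule root_subsystem_root_system[OF Phi sub])
  have bP: "b \<in> \<Phi>" using b sub by (auto simp: root_subsystem_def)
  have wC: "wall C b"
    by (rule wall_of_lifting_chamber[OF Phi sub C D L b connected_through_wall[OF ct]])
  consider "D' = D" | "D' = refl_vec b ` D"
    using chamber_across_wall_cases[OF Psi D D' b ct] by blast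
  then show "\<exists>C'. (C' \<in> Ch \<Phi> \<and> lifts_chamber \<Phi> \<Psi> C' D') \<and> connected_through C C' (hyp b)"
  proof cases
    case 1
    then show ?thesis using C L wall_connected_through_self[OF wC] by blast
  next
    case 2
    then show ?thesis
      using refl_vec_image_chamber(1)[OF Phi bP C] lifts_chamber_refl_vec_image[OF Phi sub b C D L]
        wall_connected_through_refl[OF wC root_system_nonzero[OF Phi bP]]
      by blast
  qed
  fix C1 C2
  assume h1: "(C1 \<in> Ch \<Phi> \<and> lifts_chamber \<Phi> \<Psi> C1 D') \<and> connected_through C C1 (hyp b)"
    and h2: "(C2 \<in> Ch \<Phi> \<and> lifts_chamber \<Phi> \<Psi> C2 D') \<and> connected_through C C2 (hyp b)"
  have "C1 \<subseteq> D'" "C2 \<subseteq> D'" using lifting_chamber_subset[OF Phi sub _ D'] h1 h2 by blast+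
  then have "b \<in> pos_roots \<Phi> C1 \<longleftrightarrow> b \<in> pos_roots \<Phi> C2"
    using pos_roots_lifting_iff[OF _ D' _ b bP] h1 h2 by blast
  then show "C1 = C2" using chamber_across_wall_eqI[OF Phi bP C] h1 h2 by blast
qed

section \<open>Paths with prescribed steps\<close>

lemma all_le_Suc_iff: "(\<forall>j\<le>Suc n. P j) \<longleftrightarrow> (\<forall>j\<le>n. P j) \<and> P (Suc n)"
  by (auto simp: le_Suc_eq)

lemma all_less_Suc_iff: "(\<forall>j<Suc n. P j) \<longleftrightarrow> (\<forall>j<n. P j) \<and> P n"
  by (auto simp: less_Suc_eq)

definition is_path ::
    "(nat \<Rightarrow> 'b \<Rightarrow> bool) \<Rightarrow> (nat \<Rightarrow> 'b \<Rightarrow> 'b \<Rightarrow> bool) \<Rightarrow> nat \<Rightarrow> 'b list \<Rightarrow> bool" where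
  "is_path ok adj n Xs \<longleftrightarrow> length Xs = Suc n \<and> (\<forall>j\<le>n. ok j (Xs ! j)) \<and>
     (\<forall>j<n. adj j (Xs ! j) (Xs ! Suc j))"

lemma is_path_0: "is_path ok adj 0 Xs \<longleftrightarrow> (\<exists>X. Xs = [X] \<and> ok 0 X)"
  by (auto simp: is_path_def length_Suc_conv)

lemma is_path_snoc:
  "is_path ok adj (Suc n) (Ys @ [Y]) \<longleftrightarrow> is_path ok adj n Ys \<and> ok (Suc n) Y \<and> adj n (Ys ! n) Y"
proof (cases "length Ys = Suc n")
  case True
  then have nth: "(Ys @ [Y]) ! j = Ys ! j" if "j \<le> n" for j
    using that by (simp add: nth_append)
  have "(Ys @ [Y]) ! Suc n = Y" using True by (simp add: nth_append)
  then show ?thesis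
    using True nth by (auto simp: is_path_def all_le_Suc_iff all_less_Suc_iff)
next
  case False
  then show ?thesis by (simp add: is_path_def)
qed

lemma is_path_Suc_snoc:
  assumes "is_path ok adj (Suc n) Xs"
  shows "\<exists>Ys Y. Xs = Ys @ [Y]"
  using assms by (cases Xs rule: rev_cases) (auto simp: is_path_def)

lemma ex1_path_snoc_forward:
  assumes IH: "\<exists>!Ys. is_path ok adj n Ys \<and> Ys ! i = C" and i: "i \<le> n"
    and fwd: "\<And>X. ok n X \<Longrightarrow> \<exists>!Y. ok (Suc n) Y \<and> adj n X Y"
  shows "\<exists>!Xs. is_path ok adj (Suc n) Xs \<and> Xs ! i = C"
proof -
  obtain Ys where Ys: "is_path ok adj n Ys" "Ys ! i = C"
    and Ys_unique: "\<And>Ys'. is_path ok adj n Ys' \<Longrightarrow> Ys' ! i = C \<Longrightarrow> Ys' = Ys"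
    using IH by blast
  have len: "length Ys = Suc n" and "ok n (Ys ! n)" using Ys(1) by (simp_all add: is_path_def)
  then obtain Y where Y: "ok (Suc n) Y" "adj n (Ys ! n) Y"
    and Y_unique: "\<And>Y'. ok (Suc n) Y' \<Longrightarrow> adj n (Ys ! n) Y' \<Longrightarrow> Y' = Y"
    using fwd by blast
  show ?thesis
  proof (rule ex1I[of _ "Ys @ [Y]"])
    show "is_path ok adj (Suc n) (Ys @ [Y]) \<and> (Ys @ [Y]) ! i = C"
      using Ys Y i len by (simp add: is_path_snoc nth_append)
  next
    fix Xs assume Xs: "is_path ok adj (Suc n) Xs \<and> Xs ! i = C"
    then obtain Ys' Y' where Xs_eq: "Xs = Ys' @ [Y']" using is_path_Suc_snoc by blast
    with Xs have Ys': "is_path ok adj n Ys'" "ok (Suc n) Y'" "adj n (Ys' ! n) Y'"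
      by (simp_all add: is_path_snoc)
    moreover have "Ys' ! i = C"
      using Xs Xs_eq i Ys'(1) by (auto simp: is_path_def nth_append)
    ultimately show "Xs = Ys @ [Y]" using Xs_eq Ys_unique Y_unique by blast
  qed
qed

lemma ex1_path_snoc_backward:
  assumes IH: "\<And>X. ok n X \<Longrightarrow> \<exists>!Ys. is_path ok adj n Ys \<and> Ys ! n = X"
    and bwd: "\<exists>!X. ok n X \<and> adj n X C" and C: "ok (Suc n) C"
  shows "\<exists>!Xs. is_path ok adj (Suc n) Xs \<and> Xs ! Suc n = C"
proof -
  obtain X where X: "ok n X" "adj n X C"
    and X_unique: "\<And>X'. ok n X' \<Longrightarrow> adj n X' C \<Longrightarrow> X' = X"
    using bwd by blast
  obtain Ys where Ys: "is_path ok adj n Ys" "Ys ! n = X"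
    and Ys_unique: "\<And>Ys'. is_path ok adj n Ys' \<Longrightarrow> Ys' ! n = X \<Longrightarrow> Ys' = Ys"
    using IH[OF X(1)] by blast
  have len: "length Ys = Suc n" using Ys(1) by (simp add: is_path_def)
  show ?thesis
  proof (rule ex1I[of _ "Ys @ [C]"])
    show "is_path ok adj (Suc n) (Ys @ [C]) \<and> (Ys @ [C]) ! Suc n = C"
      using Ys X C len by (simp add: is_path_snoc nth_append)
  next
    fix Xs assume Xs: "is_path ok adj (Suc n) Xs \<and> Xs ! Suc n = C"
    then obtain Ys' Y' where Xs_eq: "Xs = Ys' @ [Y']" using is_path_Suc_snoc by blast
    with Xs have Ys': "is_path ok adj n Ys'" "ok (Suc n) Y'" "adj n (Ys' ! n) Y'"
      by (simp_all add: is_path_snoc)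
    moreover have "Y' = C" using Xs Xs_eq Ys'(1) by (auto simp: is_path_def nth_append)
    moreover have "ok n (Ys' ! n)" using Ys'(1) by (simp add: is_path_def)
    ultimately show "Xs = Ys @ [C]" using Xs_eq Ys_unique X_unique by metis
  qed
qed

lemma ex1_path_through:
  assumes "\<And>j X. j < n \<Longrightarrow> ok j X \<Longrightarrow> \<exists>!Y. ok (Suc j) Y \<and> adj j X Y"
    and "\<And>j Y. j < n \<Longrightarrow> ok (Suc j) Y \<Longrightarrow> \<exists>!X. ok j X \<and> adj j X Y"
    and "i \<le> n" and "ok i C"
  shows "\<exists>!Xs. is_path ok adj n Xs \<and> Xs ! i = C"
  using assms
proof (induction n arbitrary: i C)
  case 0
  then show ?case by (auto simp: is_path_0)
next
  case (Suc n)
  have IH: "\<exists>!Ys. is_path ok adj n Ys \<and> Ys ! i' = C'" if "i' \<le> n" "ok i' C'" for i' C'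
    using Suc.IH[OF _ _ that] Suc.prems(1,2) by simp
  show ?case
  proof (cases "i \<le> n")
    case True
    then show ?thesis
      using ex1_path_snoc_forward[OF IH[OF True Suc.prems(4)] True] Suc.prems(1) by simp
  next
    case False
    then have "i = Suc n" using Suc.prems(3) by simp
    then show ?thesis
      using ex1_path_snoc_backward[of ok n adj C] IH Suc.prems(2,4) by simp
  qed
qed

section \<open>Lifting galleries\<close>

lemma gallery_nth_step:
  assumes "gallery X (Cs, Ws)" "j < length Ws"
  shows "\<exists>a\<in>X. Ws ! j = hyp a \<and> connected_through (Cs ! j) (Cs ! Suc j) (hyp a) \<and>
    Cs ! j \<in> Ch X \<and> Cs ! Suc j \<in> Ch X"
  using assms by (simp add: gallery_def)

lemma gallery_lift_iff_path:
  assumes "gallery \<Psi> (Ds, Ws)" "\<Psi> \<subseteq> \<Phi>"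
  shows "gallery \<Phi> \<Gamma> \<and> lifts_gallery \<Phi> \<Psi> \<Gamma> (Ds, Ws) \<longleftrightarrow>
    snd \<Gamma> = Ws \<and> is_path (\<lambda>j X. X \<in> Ch \<Phi> \<and> lifts_chamber \<Phi> \<Psi> X (Ds ! j))
      (\<lambda>j X Y. connected_through X Y (Ws ! j)) (length Ws) (fst \<Gamma>)"
proof -
  obtain Cs Ws' where \<Gamma>: "\<Gamma> = (Cs, Ws')" by fastforce
  show ?thesis
  proof (cases "Ws' = Ws")
    case True
    have len: "length Ds = Suc (length Ws)" using assms(1) by (simp add: gallery_def)
    have "(\<exists>a\<in>\<Phi>. Ws ! j = hyp a \<and> connected_through X Y (hyp a)) \<longleftrightarrow>
        connected_through X Y (Ws ! j)" if j: "j < length Ws" for j X Y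
    proof -
      obtain a where "a \<in> \<Psi>" "Ws ! j = hyp a"
        using gallery_nth_step[OF assms(1) j] by blast
      then show ?thesis using assms(2) by auto
    qed
    then show ?thesis
      using True len unfolding \<Gamma> gallery_def lifts_gallery_def is_path_def Let_def
      by (auto simp: less_Suc_eq_le)
  next
    case False
    then show ?thesis by (simp add: \<Gamma> lifts_gallery_def)
  qed
qed

lemma gallery_lift_step:
  assumes "root_system \<Phi>" "root_subsystem \<Phi> \<Psi>" "gallery \<Psi> (Ds, Ws)" "j < length Ws"
  shows "\<lbrakk>X \<in> Ch \<Phi>; lifts_chamber \<Phi> \<Psi> X (Ds ! j)\<rbrakk> \<Longrightarrow>
      \<exists>!Y. (Y \<in> Ch \<Phi> \<and> lifts_chamber \<Phi> \<Psi> Y (Ds ! Suc j)) \<and> connected_through X Y (Ws ! j)"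
    and "\<lbrakk>Y \<in> Ch \<Phi>; lifts_chamber \<Phi> \<Psi> Y (Ds ! Suc j)\<rbrakk> \<Longrightarrow>
      \<exists>!X. (X \<in> Ch \<Phi> \<and> lifts_chamber \<Phi> \<Psi> X (Ds ! j)) \<and> connected_through X Y (Ws ! j)"
proof -
  obtain b where b: "b \<in> \<Psi>" "Ws ! j = hyp b"
    and ct: "connected_through (Ds ! j) (Ds ! Suc j) (hyp b)"
    and D: "Ds ! j \<in> Ch \<Psi>" "Ds ! Suc j \<in> Ch \<Psi>"
    using gallery_nth_step[OF assms(3,4)] by blast
  show "\<exists>!Y. (Y \<in> Ch \<Phi> \<and> lifts_chamber \<Phi> \<Psi> Y (Ds ! Suc j)) \<and> connected_through X Y (Ws ! j)"
    if "X \<in> Ch \<Phi>" "lifts_chamber \<Phi> \<Psi> X (Ds ! j)"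
    unfolding b(2) by (rule ex1_lift_step[OF assms(1,2) D b(1) ct that])
  have "connected_through (Ds ! Suc j) (Ds ! j) (hyp b)"
    using ct connected_through_commute by blast
  then show "\<exists>!X. (X \<in> Ch \<Phi> \<and> lifts_chamber \<Phi> \<Psi> X (Ds ! j)) \<and> connected_through X Y (Ws ! j)"
    if "Y \<in> Ch \<Phi>" "lifts_chamber \<Phi> \<Psi> Y (Ds ! Suc j)"
    using ex1_lift_step[OF assms(1,2) D(2,1) b(1) _ that]
    unfolding b(2) by (simp add: connected_through_commute[of Y])
qed

theorem theorem2:
  fixes \<Phi> \<Psi> :: "'a::euclidean_space set"
    and Ds Ws :: "'a set list" and i :: nat and C :: "'a set"
  assumes "root_system \<Phi>"
    and "root_subsystem \<Phi> \<Psi>"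
    and "gallery \<Psi> (Ds, Ws)"
    and "i \<le> length Ws"
    and "C \<in> Ch \<Phi>"
    and "lifts_chamber \<Phi> \<Psi> C (Ds ! i)"
  shows "\<exists>!\<Gamma>. gallery \<Phi> \<Gamma> \<and> lifts_gallery \<Phi> \<Psi> \<Gamma> (Ds, Ws) \<and> fst \<Gamma> ! i = C"
proof -
  let ?ok = "\<lambda>j X. X \<in> Ch \<Phi> \<and> lifts_chamber \<Phi> \<Psi> X (Ds ! j)"
  let ?adj = "\<lambda>j X Y. connected_through X Y (Ws ! j)"
  have "\<exists>!Cs. is_path ?ok ?adj (length Ws) Cs \<and> Cs ! i = C"
  proof (rule ex1_path_through)
    show "\<exists>!Y. ?ok (Suc j) Y \<and> ?adj j X Y" if j: "j < length Ws" and X: "?ok j X" for j X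
      using gallery_lift_step(1)[OF assms(1-3) j X[THEN conjunct1] X[THEN conjunct2]] .
    show "\<exists>!X. ?ok j X \<and> ?adj j X Y" if j: "j < length Ws" and Y: "?ok (Suc j) Y" for j Y
      using gallery_lift_step(2)[OF assms(1-3) j Y[THEN conjunct1] Y[THEN conjunct2]] .
  qed (use assms(4-6) in simp_all)
  then obtain Cs where Cs: "is_path ?ok ?adj (length Ws) Cs \<and> Cs ! i = C"
    and Cs_unique: "\<forall>Cs'. is_path ?ok ?adj (length Ws) Cs' \<and> Cs' ! i = C \<longrightarrow> Cs' = Cs"
    by (rule ex1E)
  have "\<Psi> \<subseteq> \<Phi>" using assms(2) by (simp add: root_subsystem_def)
  note lift_iff = gallery_lift_iff_path[OF assms(3) this]
  show ?thesis
  proof (rule ex1I[of _ "(Cs, Ws)"])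
    show "gallery \<Phi> (Cs, Ws) \<and> lifts_gallery \<Phi> \<Psi> (Cs, Ws) (Ds, Ws) \<and> fst (Cs, Ws) ! i = C"
      using Cs lift_iff[of "(Cs, Ws)"] by simp
  next
    fix \<Gamma> assume "gallery \<Phi> \<Gamma> \<and> lifts_gallery \<Phi> \<Psi> \<Gamma> (Ds, Ws) \<and> fst \<Gamma> ! i = C"
    then have "snd \<Gamma> = Ws" "is_path ?ok ?adj (length Ws) (fst \<Gamma>) \<and> fst \<Gamma> ! i = C"
      using lift_iff[of \<Gamma>] by simp_all
    then show "\<Gamma> = (Cs, Ws)" using Cs_unique by (simp add: prod_eq_iff)
  qed
qed

end
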